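(* Let $R=\mathbb{Z}_4+u\mathbb{Z}_4$ with $u^2=0$, let $n$ be odd, and define $\overline{\mu}:R^n\to R^n$ by $$\overline{\mu}(c_0,c_1,\dots,c_{n-1})=(c_0,(1+2u)c_1,(1+2u)^2c_2,\dots,(1+2u)^{n-1}c_{n-1}).$$ Then $C\subseteq R^n$ is a linear cyclic code over $R$ of length $n$ if and only if $\overline{\mu}(C)$ is a linear $(1+2u)$-constacyclic code of length $n$ over $R$.
   Context: A linear code of length $n$ over $R$ is an $R$-submodule of $R^n$. It is cyclic if invariant under $\sigma(c_0,\dots,c_{n-1})=(c_{n-1},c_0,\dots,c_{n-2})$, and $(1+2u)$-constacyclic if invariant under $\tau(c_0,\dots,c_{n-1})=((1+2u)c_{n-1},c_0,\dots,c_{n-2})$. *)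

theory Defs
  imports Main "HOL-Library.Numeral_Type"
begin

text \<open>The ring R = Z4 + u Z4 with u^2 = 0: the pair (a, b) represents a + u b,
  with a, b in Z4 (the library type 4 of integers mod 4).\<close>

type_synonym R = "4 \<times> 4"

definition R_add :: "R \<Rightarrow> R \<Rightarrow> R" where
  "R_add x y = (fst x + fst y, snd x + snd y)"

definition R_mult :: "R \<Rightarrow> R \<Rightarrow> R" where
  "R_mult x y = (fst x * fst y, fst x * snd y + snd x * fst y)"

definition R_zero :: R where "R_zero = (0, 0)"
definition R_one :: R where "R_one = (1, 0)"

definition lam :: R where "lam = (1, 2)"

fun R_pow :: "R \<Rightarrow> nat \<Rightarrow> R" where
  "R_pow x 0 = R_one"
| "R_pow x (Suc k) = R_mult x (R_pow x k)"

text \<open>Words of R^n are lists of length n.\<close>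
definition vadd :: "R list \<Rightarrow> R list \<Rightarrow> R list" where
  "vadd c d = map2 R_add c d"

definition smult :: "R \<Rightarrow> R list \<Rightarrow> R list" where
  "smult r c = map (R_mult r) c"

definition linear_code :: "nat \<Rightarrow> R list set \<Rightarrow> bool" where
  "linear_code n C \<longleftrightarrow> C \<subseteq> {c. length c = n} \<and> C \<noteq> {} \<and>
     (\<forall>c\<in>C. \<forall>d\<in>C. vadd c d \<in> C) \<and> (\<forall>r. \<forall>c\<in>C. smult r c \<in> C)"

definition cyc_shift :: "R list \<Rightarrow> R list" where
  "cyc_shift c = last c # butlast c"

definition consta_shift :: "R list \<Rightarrow> R list" where
  "consta_shift c = R_mult lam (last c) # butlast c"

definition cyclic :: "R list set \<Rightarrow> bool" where
  "cyclic C \<longleftrightarrow> (\<forall>c\<in>C. cyc_shift c \<in> C)"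

definition constacyclic :: "R list set \<Rightarrow> bool" where
  "constacyclic C \<longleftrightarrow> (\<forall>c\<in>C. consta_shift c \<in> C)"

definition mu_bar :: "R list \<Rightarrow> R list" where
  "mu_bar c = map (\<lambda>i. R_mult (R_pow lam i) (c ! i)) [0..<length c]"

end

theory Submission
  imports Defs
begin

text \<open>Since \<open>(1 + 2u)\<^sup>2 = 1\<close>, the map \<open>\<mu>\<close> multiplies the coordinates alternately by
  \<open>1\<close> and \<open>1 + 2u\<close>; it is an involutive \<open>R\<close>-linear automorphism of \<open>R\<^sup>n\<close>. For odd \<open>n\<close> the
  last coordinate carries the factor \<open>1\<close>, and a direct computation gives
  \<open>\<tau>(\<mu> c) = (1 + 2u) \<mu>(\<sigma> c)\<close>. As \<open>1 + 2u\<close> is a unit, a submodule is closed under \<open>\<sigma>\<close>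
  exactly when its image under \<open>\<mu>\<close> is closed under \<open>\<tau>\<close>.\<close>

lemma R_mult_assoc: "R_mult p (R_mult r x) = R_mult (R_mult p r) x"
  by (simp add: R_mult_def algebra_simps)

lemma R_mult_left_commute: "R_mult p (R_mult r x) = R_mult r (R_mult p x)"
  by (simp add: R_mult_def algebra_simps)

lemma R_mult_R_add: "R_mult p (R_add x y) = R_add (R_mult p x) (R_mult p y)"
  by (simp add: R_mult_def R_add_def algebra_simps)

lemma R_one_mult [simp]: "R_mult R_one x = x"
  by (simp add: R_mult_def R_one_def)

lemma lam_mult_lam [simp]: "R_mult lam (R_mult lam x) = x"
proof -
  have "R_mult lam lam = R_one"
    by (simp add: R_mult_def R_one_def lam_def)
  then show ?thesis
    by (simp add: R_mult_assoc)
qed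

lemma R_pow_lam: "R_pow lam i = (if even i then R_one else lam)"
  by (induction i) (simp_all add: R_mult_def R_one_def lam_def)

lemma smult_lam_smult_lam [simp]: "smult lam (smult lam c) = c"
  by (simp add: smult_def comp_def)

lemma length_mu_bar [simp]: "length (mu_bar c) = length c"
  by (simp add: mu_bar_def)

lemma nth_mu_bar [simp]: "i < length c \<Longrightarrow> mu_bar c ! i = R_mult (R_pow lam i) (c ! i)"
  by (simp add: mu_bar_def)

lemma mu_bar_mu_bar [simp]: "mu_bar (mu_bar c) = c"
  by (rule nth_equalityI) (simp_all add: R_pow_lam)

lemma mu_bar_image_image [simp]: "mu_bar ` mu_bar ` C = C"
  by (simp add: image_image)

lemma mu_bar_vadd: "length c = length d \<Longrightarrow> mu_bar (vadd c d) = vadd (mu_bar c) (mu_bar d)"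
  by (rule nth_equalityI) (simp_all add: vadd_def R_mult_R_add)

lemma mu_bar_smult: "mu_bar (smult r c) = smult r (mu_bar c)"
  by (rule nth_equalityI) (simp_all add: smult_def R_mult_left_commute)

lemma mu_bar_Cons: "mu_bar (x # c) = x # smult lam (mu_bar c)"
proof (rule nth_equalityI)
  fix i assume "i < length (mu_bar (x # c))"
  then show "mu_bar (x # c) ! i = (x # smult lam (mu_bar c)) ! i"
    by (cases i) (simp_all add: smult_def R_mult_assoc)
qed (simp add: smult_def)

lemma mu_bar_snoc: "mu_bar (c @ [x]) = mu_bar c @ [R_mult (R_pow lam (length c)) x]"
  by (rule nth_equalityI) (auto simp: nth_append less_Suc_eq)

lemma consta_shift_mu_bar:
  assumes "odd (length c)"
  shows "consta_shift (mu_bar c) = smult lam (mu_bar (cyc_shift c))"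
proof -
  obtain b x where c: "c = b @ [x]"
    using assms by (cases c rule: rev_cases) auto
  with assms have "even (length b)" by simp
  then show ?thesis
    by (simp add: c consta_shift_def cyc_shift_def mu_bar_snoc mu_bar_Cons R_pow_lam)
      (simp add: smult_def comp_def)
qed

lemma linear_code_length: "linear_code n C \<Longrightarrow> c \<in> C \<Longrightarrow> length c = n"
  unfolding linear_code_def by blast

lemma linear_code_smult: "linear_code n C \<Longrightarrow> c \<in> C \<Longrightarrow> smult r c \<in> C"
  unfolding linear_code_def by blast

lemma linear_code_mu_bar_image:
  assumes "linear_code n C"
  shows "linear_code n (mu_bar ` C)"
proof -
  note len = linear_code_length[OF assms]
  have "vadd (mu_bar c) (mu_bar d) \<in> mu_bar ` C" if "c \<in> C" "d \<in> C" for c d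
  proof -
    have "vadd c d \<in> C"
      using assms that unfolding linear_code_def by blast
    then show ?thesis
      using that len mu_bar_vadd[of c d] by (metis image_eqI)
  qed
  moreover have "smult r (mu_bar c) \<in> mu_bar ` C" if "c \<in> C" for r c
    using that linear_code_smult[OF assms] mu_bar_smult[of r c] by (metis image_eqI)
  moreover have "mu_bar ` C \<subseteq> {c. length c = n}" "mu_bar ` C \<noteq> {}"
    using assms len unfolding linear_code_def by auto
  ultimately show ?thesis
    unfolding linear_code_def by blast
qed

lemma linear_code_mu_bar_image_iff: "linear_code n (mu_bar ` C) \<longleftrightarrow> linear_code n C"
  using linear_code_mu_bar_image[of n C] linear_code_mu_bar_image[of n "mu_bar ` C"] by auto

lemma cyclic_iff_constacyclic_mu_bar:
  assumes "linear_code n C" and "odd n"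
  shows "cyclic C \<longleftrightarrow> constacyclic (mu_bar ` C)"
proof
  assume "cyclic C"
  show "constacyclic (mu_bar ` C)"
    unfolding constacyclic_def
  proof
    fix d assume "d \<in> mu_bar ` C"
    then obtain c where c: "c \<in> C" "d = mu_bar c" by auto
    have "odd (length c)"
      using c assms linear_code_length by metis
    then have "consta_shift d = mu_bar (smult lam (cyc_shift c))"
      by (simp add: c(2) consta_shift_mu_bar mu_bar_smult)
    moreover have "smult lam (cyc_shift c) \<in> C"
      using c \<open>cyclic C\<close> assms(1) by (simp add: cyclic_def linear_code_smult)
    ultimately show "consta_shift d \<in> mu_bar ` C" by blast
  qed
next
  assume "constacyclic (mu_bar ` C)"
  have closed: "linear_code n (mu_bar ` C)"
    using assms(1) by (rule linear_code_mu_bar_image)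
  show "cyclic C"
    unfolding cyclic_def
  proof
    fix c assume c: "c \<in> C"
    have "odd (length c)"
      using c assms linear_code_length by metis
    then have "mu_bar (cyc_shift c) = smult lam (consta_shift (mu_bar c))"
      by (simp add: consta_shift_mu_bar)
    also have "\<dots> \<in> mu_bar ` C"
      using c \<open>constacyclic (mu_bar ` C)\<close> closed
      by (simp add: constacyclic_def linear_code_smult)
    finally show "cyc_shift c \<in> C"
      by (metis image_iff mu_bar_mu_bar)
  qed
qed

theorem corollary4p7:
  fixes n :: nat and C :: "R list set"
  assumes "odd n"
    and "C \<subseteq> {c. length c = n}"
  shows "(linear_code n C \<and> cyclic C) \<longleftrightarrow>
         (linear_code n (mu_bar ` C) \<and> constacyclic (mu_bar ` C))"
  using cyclic_iff_constacyclic_mu_bar[OF _ assms(1)] linear_code_mu_bar_image_iff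
  by blast

end
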